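(* Let $d\ge 1$, $T\ge 1$, let $\mathcal{X}\subseteq\mathbb{R}^d$ be a non-empty closed convex set containing $\mathbf{0}$, and let $0<\mu\le L$. Let $f_1,\dots,f_T:\mathcal{X}\to[0,\infty)$ be differentiable functions such that, for every $t$ and all $x,y\in\mathcal{X}$, $$\frac{\mu}{2}\|y-x\|^2\le f_t(y)-f_t(x)-\langle\nabla f_t(x),y-x\rangle\le\frac{L}{2}\|y-x\|^2 .$$ Assume that each minimizer $x_t^\star=\arg\min_{x\in\mathcal{X}}f_t(x)$ lies in the interior of $\mathcal{X}$. Let the starting point be $x_0=\mathbf{0}$, let $C_{\mathcal{A}_o}$ be the quadratic-switching cost of the OMGD algorithm with $K=\lceil\frac{L+\mu}{2\mu}\ln 4\rceil$, and let $C_{\mathsf{OPT}}$ be the optimal offline quadratic-switching cost. Then $$\frac{C_{\mathcal{A}_o}}{C_{\mathsf{OPT}}}\le 4(L+5)+\frac{16(L+5)}{\mu}.$$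
   Context: $\|\cdot\|$ is the Euclidean norm and $\Pi_{\mathcal{X}}(y)=\arg\min_{z\in\mathcal{X}}\|z-y\|$ is the Euclidean projection. For a sequence $(y_1,\dots,y_T)\in\mathcal{X}^T$ with $y_0=x_0$, its quadratic-switching cost is $\sum_{t=1}^T\big(f_t(y_t)+\frac12\|y_t-y_{t-1}\|^2\big)$. $C_{\mathsf{OPT}}$ is the minimum of this cost over all $(y_1,\dots,y_T)\in\mathcal{X}^T$ (with $y_0=x_0$). The OMGD (online multiple gradient descent) algorithm with parameter $K$ produces $x_1=x_0$ and, for $t=2,\dots,T$: set $z_t^{(0)}=x_{t-1}$, for $k=1,\dots,K$ set $z_t^{(k)}=\Pi_{\mathcal{X}}\big(z_t^{(k-1)}-\frac1L\nabla f_{t-1}(z_t^{(k-1)})\big)$, and set $x_t=z_t^{(K)}$. $C_{\mathcal{A}_o}$ is the quadratic-switching cost of $(x_1,\dots,x_T)$. *)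

theory Defs
  imports "HOL-Analysis.Analysis"
begin

definition pgd_step :: "'a::euclidean_space set \<Rightarrow> real \<Rightarrow> (nat \<Rightarrow> 'a \<Rightarrow> 'a) \<Rightarrow> nat \<Rightarrow> 'a \<Rightarrow> 'a" where
  "pgd_step X L g t z = closest_point X (z - (1 / L) *\<^sub>R g t z)"

fun omgd :: "'a::euclidean_space set \<Rightarrow> real \<Rightarrow> (nat \<Rightarrow> 'a \<Rightarrow> 'a) \<Rightarrow> nat \<Rightarrow> 'a \<Rightarrow> nat \<Rightarrow> 'a" where
  "omgd X L g K x0 0 = x0"
| "omgd X L g K x0 (Suc 0) = x0"
| "omgd X L g K x0 (Suc (Suc n)) = (pgd_step X L g (Suc n) ^^ K) (omgd X L g K x0 (Suc n))"

definition sw_cost :: "(nat \<Rightarrow> 'a::euclidean_space \<Rightarrow> real) \<Rightarrow> nat \<Rightarrow> (nat \<Rightarrow> 'a) \<Rightarrow> real" where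
  "sw_cost f T y = (\<Sum>t\<in>{1..T}. f t (y t) + (1/2) * (norm (y t - y (t - 1)))\<^sup>2)"

definition opt_cost :: "'a::euclidean_space set \<Rightarrow> (nat \<Rightarrow> 'a \<Rightarrow> real) \<Rightarrow> nat \<Rightarrow> 'a \<Rightarrow> real" where
  "opt_cost X f T x0 = Inf {sw_cost f T y | y. y 0 = x0 \<and> (\<forall>t\<in>{1..T}. y t \<in> X)}"

end

theory Submission
  imports Defs
begin

(* Each f_t attains its minimum at an interior point m_t, where its gradient vanishes, so
   f_t(m_t) + mu/2 |y - m_t|^2 <= f_t(y) <= f_t(m_t) + L/2 |y - m_t|^2.  A projected gradient step
   contracts the squared distance to m_t by (L - mu)/(L + mu), so K steps contract it by 1/4 and the
   OMGD iterate x_t tracks m_{t-1}.  Summing, the squared tracking errors |x_t - m_t|^2 are at most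
   4 P, where P = sum |m_t - m_{t-1}|^2, and the online cost is at most sum f_t(m_t) + (2L + 5) P.
   Conversely, routing m_t - m_{t-1} through y_t and y_{t-1} bounds P by (2 + 8/mu) times the excess
   cost of any offline sequence y over sum f_t(m_t); and (2L + 5)(2 + 8/mu) <= 4(L + 5) + 16(L + 5)/mu. *)

subsection \<open>Strongly convex functions with an interior minimum\<close>

lemma strongly_convex_attains_min:
  fixes F :: "'a::euclidean_space \<Rightarrow> real" and G :: "'a \<Rightarrow> 'a"
  assumes X: "closed X" and a: "a \<in> X" and cont: "continuous_on X F" and mu: "0 < \<mu>"
    and sc: "\<And>x y. x \<in> X \<Longrightarrow> y \<in> X \<Longrightarrow> \<mu> / 2 * (norm (y - x))\<^sup>2 \<le> F y - F x - G x \<bullet> (y - x)"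
  shows "\<exists>z\<in>X. \<forall>y\<in>X. F z \<le> F y"
proof -
  define R where "R = 2 * norm (G a) / \<mu>"
  have "compact (X \<inter> cball a R)"
    using X by (simp add: closed_Int_compact)
  moreover have "X \<inter> cball a R \<noteq> {}"
    using a mu by (auto simp: R_def)
  moreover have "continuous_on (X \<inter> cball a R) F"
    using cont by (rule continuous_on_subset) auto
  ultimately obtain z where z: "z \<in> X \<inter> cball a R" and zmin: "\<forall>y\<in>X \<inter> cball a R. F z \<le> F y"
    using continuous_attains_inf by blast
  have "F z \<le> F y" if y: "y \<in> X" for y
  proof (cases "y \<in> cball a R")
    case True
    then show ?thesis using zmin y by auto
  next
    case False
    \<comment> \<open>outside the ball the quadratic growth beats the linear term, so F y \<ge> F a\<close>
    then have "norm (G a) \<le> \<mu> / 2 * norm (y - a)"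
      using mu by (simp add: R_def dist_norm norm_minus_commute field_simps)
    then have "norm (G a) * norm (y - a) \<le> \<mu> / 2 * (norm (y - a))\<^sup>2"
      by (metis mult_right_mono norm_ge_zero power2_eq_square mult.assoc)
    moreover have "- (G a \<bullet> (y - a)) \<le> norm (G a) * norm (y - a)"
      using norm_cauchy_schwarz[of "- G a" "y - a"] by simp
    moreover have "F z \<le> F a"
      using zmin a mu by (auto simp: R_def)
    ultimately show ?thesis
      using sc[OF a y] by linarith
  qed
  then show ?thesis using z by blast
qed

lemma gradient_zero_at_interior_min:
  fixes F :: "'a::euclidean_space \<Rightarrow> real"
  assumes d: "(F has_derivative (\<lambda>h. G \<bullet> h)) (at z within X)"
    and z: "z \<in> interior X" and zmin: "\<forall>y\<in>X. F z \<le> F y"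
  shows "G = 0"
proof -
  have "eventually (\<lambda>y. y \<in> X) (at z within X)"
    by (simp add: eventually_at_filter)
  then have "eventually (\<lambda>y. F z \<le> F y) (at z)"
    using zmin at_within_interior[OF z] by (auto elim: eventually_mono)
  moreover have "(F has_derivative (\<lambda>h. G \<bullet> h)) (at z)"
    using d at_within_interior[OF z] by simp
  ultimately have "(\<lambda>h. G \<bullet> h) = (\<lambda>h. 0)"
    using has_derivative_local_min by blast
  then have "G \<bullet> G = 0" by metis
  then show ?thesis by simp
qed

lemma exists_stationary_minimizers:
  fixes f :: "nat \<Rightarrow> 'a::euclidean_space \<Rightarrow> real"
  assumes X: "closed X" "x0 \<in> X" and mu: "0 < \<mu>"
    and grad: "\<And>t x. t \<in> {1..T} \<Longrightarrow> x \<in> X \<Longrightarrow> (f t has_derivative (\<lambda>h. g t x \<bullet> h)) (at x within X)"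
    and sc: "\<And>t x y. t \<in> {1..T} \<Longrightarrow> x \<in> X \<Longrightarrow> y \<in> X \<Longrightarrow>
               \<mu> / 2 * (norm (y - x))\<^sup>2 \<le> f t y - f t x - g t x \<bullet> (y - x)"
    and interior_min: "\<And>t x. t \<in> {1..T} \<Longrightarrow> x \<in> X \<Longrightarrow> (\<forall>y\<in>X. f t x \<le> f t y) \<Longrightarrow> x \<in> interior X"
  shows "\<exists>m. m 0 = x0 \<and> (\<forall>t\<in>{1..T}. m t \<in> X \<and> g t (m t) = 0)"
proof -
  have "\<forall>t\<in>{1..T}. \<exists>z. z \<in> X \<and> g t z = 0"
  proof
    fix t
    assume t: "t \<in> {1..T}"
    obtain z where z: "z \<in> X" and zmin: "\<forall>y\<in>X. f t z \<le> f t y"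
      using strongly_convex_attains_min[OF X has_derivative_continuous_on[OF grad[OF t]] mu sc[OF t]]
      by blast
    then show "\<exists>z. z \<in> X \<and> g t z = 0"
      using gradient_zero_at_interior_min[OF grad[OF t z] interior_min[OF t z zmin] zmin] by blast
  qed
  from bchoice[OF this]
  obtain m where "\<forall>t\<in>{1..T}. m t \<in> X \<and> g t (m t) = 0"
    by blast
  \<comment> \<open>index 0 carries the start point, so that the path length of m is measured from x0\<close>
  then show ?thesis
    by (intro exI[of _ "m(0 := x0)"]) auto
qed

subsection \<open>Contraction of projected gradient descent\<close>

lemma pgd_step_sq_dist_le:
  fixes F :: "'a::euclidean_space \<Rightarrow> real" and g :: "nat \<Rightarrow> 'a \<Rightarrow> 'a"
  assumes X: "convex X" "closed X" and x: "x \<in> X" and z: "z \<in> X" and gz: "g t z = 0"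
    and muL: "0 < \<mu>" "\<mu> \<le> L"
    and sc: "\<And>x y. x \<in> X \<Longrightarrow> y \<in> X \<Longrightarrow> \<mu> / 2 * (norm (y - x))\<^sup>2 \<le> F y - F x - g t x \<bullet> (y - x)"
    and sm: "\<And>x y. x \<in> X \<Longrightarrow> y \<in> X \<Longrightarrow> F y - F x - g t x \<bullet> (y - x) \<le> L / 2 * (norm (y - x))\<^sup>2"
  shows "(norm (pgd_step X L g t x - z))\<^sup>2 \<le> (L - \<mu>) / (L + \<mu>) * (norm (x - z))\<^sup>2"
proof -
  define p where "p = pgd_step X L g t x"
  define u where "u = x - z"
  define v where "v = p - z"
  have p: "p \<in> X"
    using X x closest_point_in_set by (fastforce simp: p_def pgd_step_def)
  have smooth: "F p - F x - g t x \<bullet> (v - u) \<le> L / 2 * (v \<bullet> v - 2 * (u \<bullet> v) + u \<bullet> u)"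
  proof -
    have "(norm (v - u))\<^sup>2 = v \<bullet> v - 2 * (u \<bullet> v) + u \<bullet> u"
      by (simp add: power2_norm_eq_inner inner_diff_left inner_diff_right inner_commute)
    then show ?thesis using sm[OF x p] by (simp add: u_def v_def)
  qed
  have convex_xz: "\<mu> / 2 * (u \<bullet> u) \<le> F z - F x + g t x \<bullet> u"
  proof -
    have "z - x = - u" by (simp add: u_def)
    then show ?thesis using sc[OF x z] by (simp add: power2_norm_eq_inner)
  qed
  have convex_zp: "\<mu> / 2 * (v \<bullet> v) \<le> F p - F z"
    using sc[OF z p] gz by (simp add: v_def power2_norm_eq_inner)
  \<comment> \<open>variational inequality of the projection, tested at z\<close>
  have "((u - v) - (1/L) *\<^sub>R g t x) \<bullet> (- v) \<le> 0"
    using closest_point_dot[OF X z, of "x - (1/L) *\<^sub>R g t x"]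
    by (simp add: p_def pgd_step_def u_def v_def algebra_simps)
  then have "v \<bullet> v + (1/L) * (g t x \<bullet> v) \<le> u \<bullet> v"
    by (simp add: inner_diff_left inner_diff_right inner_commute)
  then have proj: "L * (v \<bullet> v) - L * (u \<bullet> v) + g t x \<bullet> v \<le> 0"
    using muL by (simp add: field_simps)
  have "(L + \<mu>) * (v \<bullet> v) \<le> (L - \<mu>) * (u \<bullet> u)"
    using smooth convex_xz convex_zp proj by (simp add: inner_diff_right algebra_simps)
  then have "v \<bullet> v \<le> (L - \<mu>) / (L + \<mu>) * (u \<bullet> u)"
    using muL by (simp add: field_simps)
  then show ?thesis by (simp add: p_def u_def v_def power2_norm_eq_inner)
qed

lemma pgd_iterate_in:
  assumes "closed X" "z \<in> X"
  shows "(pgd_step X L g t ^^ k) z \<in> X"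
  using assms by (induction k) (auto simp: pgd_step_def intro!: closest_point_in_set)

lemma pgd_iterate_sq_dist_le:
  fixes F :: "'a::euclidean_space \<Rightarrow> real" and g :: "nat \<Rightarrow> 'a \<Rightarrow> 'a"
  assumes X: "convex X" "closed X" and x: "x \<in> X" and z: "z \<in> X" and gz: "g t z = 0"
    and muL: "0 < \<mu>" "\<mu> \<le> L"
    and sc: "\<And>x y. x \<in> X \<Longrightarrow> y \<in> X \<Longrightarrow> \<mu> / 2 * (norm (y - x))\<^sup>2 \<le> F y - F x - g t x \<bullet> (y - x)"
    and sm: "\<And>x y. x \<in> X \<Longrightarrow> y \<in> X \<Longrightarrow> F y - F x - g t x \<bullet> (y - x) \<le> L / 2 * (norm (y - x))\<^sup>2"
  shows "(norm ((pgd_step X L g t ^^ k) x - z))\<^sup>2 \<le> ((L - \<mu>) / (L + \<mu>)) ^ k * (norm (x - z))\<^sup>2"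
proof (induction k)
  case 0
  then show ?case by simp
next
  case (Suc k)
  let ?w = "(pgd_step X L g t ^^ k) x"
  have "(norm ((pgd_step X L g t ^^ Suc k) x - z))\<^sup>2 \<le> (L - \<mu>) / (L + \<mu>) * (norm (?w - z))\<^sup>2"
    using pgd_step_sq_dist_le[where F = F and g = g and t = t,
        OF X pgd_iterate_in[OF X(2) x, where L = L and g = g and t = t and k = k] z gz muL sc sm]
    by simp
  also have "\<dots> \<le> (L - \<mu>) / (L + \<mu>) * (((L - \<mu>) / (L + \<mu>)) ^ k * (norm (x - z))\<^sup>2)"
    using Suc.IH muL by (intro mult_left_mono) auto
  finally show ?case by simp
qed

lemma pgd_rate_power_le_quarter:
  fixes \<mu> L :: real
  assumes "0 < \<mu>" "\<mu> \<le> L"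
  shows "((L - \<mu>) / (L + \<mu>)) ^ nat \<lceil>(L + \<mu>) / (2 * \<mu>) * ln 4\<rceil> \<le> 1/4"
proof -
  define K where "K = nat \<lceil>(L + \<mu>) / (2 * \<mu>) * ln 4\<rceil>"
  define c where "c = 2 * \<mu> / (L + \<mu>)"
  have rate: "(L - \<mu>) / (L + \<mu>) = 1 - c"
    using assms by (simp add: c_def field_simps)
  have "(1 - c) ^ K \<le> exp (- c) ^ K"
    using assms exp_ge_add_one_self[of "- c"] by (intro power_mono) (auto simp: rate[symmetric])
  also have "\<dots> = exp (- (c * K))"
    by (simp add: exp_of_nat_mult[symmetric] mult.commute)
  also have "\<dots> \<le> exp (- ln 4)"
  proof -
    have "(L + \<mu>) / (2 * \<mu>) * ln 4 \<le> K"
      unfolding K_def by linarith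
    then have "ln 4 \<le> c * K"
      using assms by (simp add: c_def field_simps)
    then show ?thesis by simp
  qed
  also have "\<dots> = 1/4"
    by (simp add: exp_minus)
  finally show ?thesis by (simp add: rate K_def)
qed

lemma omgd_in:
  assumes "closed X" "x0 \<in> X"
  shows "omgd X L g K x0 t \<in> X"
  using assms by (induction X L g K x0 t rule: omgd.induct) (auto intro: pgd_iterate_in)

lemma omgd_tracks_minimizer:
  fixes f :: "nat \<Rightarrow> 'a::euclidean_space \<Rightarrow> real"
  assumes X: "convex X" "closed X" and x0: "x0 \<in> X" and muL: "0 < \<mu>" "\<mu> \<le> L"
    and K: "((L - \<mu>) / (L + \<mu>)) ^ K \<le> 1/4" and t: "2 \<le> t"
    and z: "z \<in> X" and gz: "g (t - 1) z = 0"
    and sc: "\<And>x y. x \<in> X \<Longrightarrow> y \<in> X \<Longrightarrow>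
               \<mu> / 2 * (norm (y - x))\<^sup>2 \<le> f (t - 1) y - f (t - 1) x - g (t - 1) x \<bullet> (y - x)"
    and sm: "\<And>x y. x \<in> X \<Longrightarrow> y \<in> X \<Longrightarrow>
               f (t - 1) y - f (t - 1) x - g (t - 1) x \<bullet> (y - x) \<le> L / 2 * (norm (y - x))\<^sup>2"
  shows "(norm (omgd X L g K x0 t - z))\<^sup>2 \<le> (norm (omgd X L g K x0 (t - 1) - z))\<^sup>2 / 4"
proof -
  obtain n where n: "t = Suc (Suc n)"
    using t by (metis add_2_eq_Suc le_Suc_ex)
  let ?x = "omgd X L g K x0 (Suc n)"
  have "(norm (omgd X L g K x0 t - z))\<^sup>2 \<le> ((L - \<mu>) / (L + \<mu>)) ^ K * (norm (?x - z))\<^sup>2"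
    using pgd_iterate_sq_dist_le[where F = "f (Suc n)" and g = g and t = "Suc n", OF X omgd_in[OF X(2) x0] z]
      gz sc sm muL
    by (simp add: n)
  also have "\<dots> \<le> 1/4 * (norm (?x - z))\<^sup>2"
    using K by (intro mult_right_mono) auto
  finally show ?thesis by (simp add: n)
qed

subsection \<open>Online and offline costs in terms of the minimizers\<close>

definition sq_path_length :: "(nat \<Rightarrow> 'a::real_normed_vector) \<Rightarrow> nat \<Rightarrow> real" where
  "sq_path_length y T = (\<Sum>t\<in>{1..T}. (norm (y t - y (t - 1)))\<^sup>2)"

lemma sw_cost_eq:
  "sw_cost f T y = (\<Sum>t\<in>{1..T}. f t (y t)) + sq_path_length y T / 2"
  by (simp add: sw_cost_def sq_path_length_def sum.distrib sum_divide_distrib)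

lemma sum_pred_le_sum:
  fixes h :: "nat \<Rightarrow> real"
  assumes "h 0 \<le> h n"
  shows "(\<Sum>t\<in>{1..n}. h (t - 1)) \<le> (\<Sum>t\<in>{1..n}. h t)"
proof -
  have "(\<Sum>t\<in>{1..n}. h (t - 1)) + h n = (\<Sum>t\<in>{1..n}. h t) + h 0"
    by (induction n) auto
  with assms show ?thesis by linarith
qed

lemma sq_dist_le_two_legs:
  fixes a b c :: "'a::real_normed_vector"
  shows "(norm (a - c))\<^sup>2 \<le> 2 * (norm (a - b))\<^sup>2 + 2 * (norm (b - c))\<^sup>2"
proof -
  have "(norm (a - c))\<^sup>2 \<le> (norm (a - b) + norm (b - c))\<^sup>2"
    using dist_triangle[of a c b] by (simp add: dist_norm power_mono)
  also have "\<dots> \<le> 2 * (norm (a - b))\<^sup>2 + 2 * (norm (b - c))\<^sup>2"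
    using zero_le_power2[of "norm (a - b) - norm (b - c)"] by (simp add: power2_eq_square algebra_simps)
  finally show ?thesis .
qed

lemma sq_dist_le_three_legs:
  fixes a b c d :: "'a::real_normed_vector" and \<mu> :: real
  assumes "0 < \<mu>"
  shows "(norm (a - d))\<^sup>2
    \<le> (2 + 8 / \<mu>) * (\<mu> / 4 * (norm (a - b))\<^sup>2 + 1/2 * (norm (b - c))\<^sup>2 + \<mu> / 4 * (norm (c - d))\<^sup>2)"
proof -
  define p where "p = norm (a - b)"
  define q where "q = norm (b - c)"
  define r where "r = norm (c - d)"
  have "(norm (a - d))\<^sup>2 \<le> (p + q + r)\<^sup>2"
    using dist_triangle[of a d b] dist_triangle[of b d c]
    by (intro power_mono) (auto simp: p_def q_def r_def dist_norm)
  also have "\<dots> \<le> (2 + 8 / \<mu>) * (\<mu> / 4 * p\<^sup>2 + 1/2 * q\<^sup>2 + \<mu> / 4 * r\<^sup>2)"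
  proof -
    have "(2 + 8 / \<mu>) * (\<mu> / 4 * p\<^sup>2 + 1/2 * q\<^sup>2 + \<mu> / 4 * r\<^sup>2) - (p + q + r)\<^sup>2
        = ((\<mu> * p - 2 * q)\<^sup>2 + (\<mu> * r - 2 * q)\<^sup>2) / (2 * \<mu>) + (p - r)\<^sup>2"
      using assms by (simp add: field_simps power2_eq_square)
    moreover have "0 \<le> ((\<mu> * p - 2 * q)\<^sup>2 + (\<mu> * r - 2 * q)\<^sup>2) / (2 * \<mu>)"
      using assms by simp
    ultimately show ?thesis by (smt (verit) zero_le_power2)
  qed
  finally show ?thesis by (simp add: p_def q_def r_def)
qed

context
  fixes x m :: "nat \<Rightarrow> 'a::real_normed_vector" and T :: nat
  assumes start: "x 0 = m 0" "x 1 = m 0"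
    and track: "\<And>t. t \<in> {2..T} \<Longrightarrow> (norm (x t - m (t - 1)))\<^sup>2 \<le> (norm (x (t - 1) - m (t - 1)))\<^sup>2 / 4"
begin

lemma tracking_error_le:
  "(\<Sum>t\<in>{1..T}. (norm (x t - m t))\<^sup>2) \<le> 4 * sq_path_length m T"
proof -
  define e where "e t = (norm (x t - m t))\<^sup>2" for t
  have step: "e t \<le> e (t - 1) / 2 + 2 * (norm (m t - m (t - 1)))\<^sup>2" if t: "t \<in> {1..T}" for t
  proof (cases "t = 1")
    case True
    then show ?thesis using start by (simp add: e_def norm_minus_commute)
  next
    case False
    then have "(norm (x t - m (t - 1)))\<^sup>2 \<le> e (t - 1) / 4"
      using t track by (simp add: e_def)
    then show ?thesis
      using sq_dist_le_two_legs[where a = "x t" and b = "m (t - 1)" and c = "m t"]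
      by (simp add: e_def norm_minus_commute)
  qed
  have "(\<Sum>t\<in>{1..T}. e t) \<le> (\<Sum>t\<in>{1..T}. e (t - 1) / 2 + 2 * (norm (m t - m (t - 1)))\<^sup>2)"
    using step by (rule sum_mono)
  also have "\<dots> = (\<Sum>t\<in>{1..T}. e (t - 1)) / 2 + 2 * sq_path_length m T"
    by (simp add: sq_path_length_def sum.distrib sum_divide_distrib sum_distrib_left)
  also have "\<dots> \<le> (\<Sum>t\<in>{1..T}. e t) / 2 + 2 * sq_path_length m T"
    using sum_pred_le_sum[of e T] start by (simp add: e_def)
  finally show ?thesis by (simp add: e_def)
qed

lemma sq_path_length_le_tracking_error:
  "sq_path_length x T \<le> 5/2 * (\<Sum>t\<in>{1..T}. (norm (x t - m t))\<^sup>2)"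
proof -
  define e where "e t = (norm (x t - m t))\<^sup>2" for t
  have step: "(norm (x t - x (t - 1)))\<^sup>2 \<le> 5/2 * e (t - 1)" if t: "t \<in> {1..T}" for t
  proof (cases "t = 1")
    case True
    then show ?thesis using start by (simp add: e_def)
  next
    case False
    then have "(norm (x t - m (t - 1)))\<^sup>2 \<le> e (t - 1) / 4"
      using t track by (simp add: e_def)
    then show ?thesis
      using sq_dist_le_two_legs[where a = "x t" and b = "m (t - 1)" and c = "x (t - 1)"]
      by (simp add: e_def norm_minus_commute)
  qed
  have "sq_path_length x T \<le> (\<Sum>t\<in>{1..T}. 5/2 * e (t - 1))"
    unfolding sq_path_length_def using step by (rule sum_mono)
  also have "\<dots> = 5/2 * (\<Sum>t\<in>{1..T}. e (t - 1))"
    by (simp only: sum_distrib_left)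
  also have "\<dots> \<le> 5/2 * (\<Sum>t\<in>{1..T}. e t)"
    using sum_pred_le_sum[of e T] start by (simp add: e_def)
  finally show ?thesis by (simp add: e_def)
qed

end

lemma sq_path_length_le_excess_cost:
  fixes m y :: "nat \<Rightarrow> 'a::euclidean_space" and \<mu> :: real
  assumes mu: "0 < \<mu>" and start: "y 0 = m 0"
    and lower: "\<And>t. t \<in> {1..T} \<Longrightarrow> f t (m t) + \<mu> / 2 * (norm (y t - m t))\<^sup>2 \<le> f t (y t)"
  shows "sq_path_length m T \<le> (2 + 8 / \<mu>) * (sw_cost f T y - (\<Sum>t\<in>{1..T}. f t (m t)))"
proof -
  define a where "a t = (norm (y t - m t))\<^sup>2" for t
  define A where "A = (\<Sum>t\<in>{1..T}. a t)"
  have "sq_path_length m T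
      \<le> (\<Sum>t\<in>{1..T}. (2 + 8 / \<mu>) * (\<mu> / 4 * a t + 1/2 * (norm (y t - y (t - 1)))\<^sup>2 + \<mu> / 4 * a (t - 1)))"
    unfolding sq_path_length_def a_def using sq_dist_le_three_legs[OF mu]
    by (intro sum_mono) (simp add: norm_minus_commute)
  also have "\<dots> = (2 + 8 / \<mu>) * (\<mu> / 4 * A + sq_path_length y T / 2 + \<mu> / 4 * (\<Sum>t\<in>{1..T}. a (t - 1)))"
  proof -
    have "(\<Sum>t\<in>{1..T}. \<mu> / 4 * a t + 1/2 * (norm (y t - y (t - 1)))\<^sup>2 + \<mu> / 4 * a (t - 1))
        = \<mu> / 4 * A + sq_path_length y T / 2 + \<mu> / 4 * (\<Sum>t\<in>{1..T}. a (t - 1))"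
      by (simp add: A_def sq_path_length_def sum.distrib sum_distrib_left sum_divide_distrib)
    then show ?thesis by (simp only: sum_distrib_left[symmetric])
  qed
  also have "\<dots> \<le> (2 + 8 / \<mu>) * (\<mu> / 2 * A + sq_path_length y T / 2)"
  proof (rule mult_left_mono)
    have "\<mu> / 4 * (\<Sum>t\<in>{1..T}. a (t - 1)) \<le> \<mu> / 4 * A"
      using sum_pred_le_sum[of a T] start mu by (intro mult_left_mono) (auto simp: A_def a_def)
    then show "\<mu> / 4 * A + sq_path_length y T / 2 + \<mu> / 4 * (\<Sum>t\<in>{1..T}. a (t - 1))
        \<le> \<mu> / 2 * A + sq_path_length y T / 2"
      by linarith
  qed (use mu in simp)
  also have "\<dots> \<le> (2 + 8 / \<mu>) * (sw_cost f T y - (\<Sum>t\<in>{1..T}. f t (m t)))"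
  proof -
    have "(\<Sum>t\<in>{1..T}. f t (m t) + \<mu> / 2 * a t) \<le> (\<Sum>t\<in>{1..T}. f t (y t))"
      using lower by (intro sum_mono) (simp add: a_def)
    then show ?thesis
      using mu by (intro mult_left_mono) (auto simp: sw_cost_eq A_def sum.distrib sum_distrib_left)
  qed
  finally show ?thesis .
qed

lemma sw_cost_le_of_tracking:
  fixes x m y :: "nat \<Rightarrow> 'a::euclidean_space"
  assumes muL: "0 < \<mu>" "\<mu> \<le> L"
    and start: "x 0 = m 0" "x 1 = m 0" "y 0 = m 0"
    and track: "\<And>t. t \<in> {2..T} \<Longrightarrow> (norm (x t - m (t - 1)))\<^sup>2 \<le> (norm (x (t - 1) - m (t - 1)))\<^sup>2 / 4"
    and upper: "\<And>t. t \<in> {1..T} \<Longrightarrow> f t (x t) \<le> f t (m t) + L / 2 * (norm (x t - m t))\<^sup>2"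
    and lower: "\<And>t. t \<in> {1..T} \<Longrightarrow> f t (m t) + \<mu> / 2 * (norm (y t - m t))\<^sup>2 \<le> f t (y t)"
    and nonneg: "\<And>t. t \<in> {1..T} \<Longrightarrow> 0 \<le> f t (m t)"
  shows "sw_cost f T x \<le> (4 * (L + 5) + 16 * (L + 5) / \<mu>) * sw_cost f T y"
proof -
  define Fm where "Fm = (\<Sum>t\<in>{1..T}. f t (m t))"
  define E where "E = (\<Sum>t\<in>{1..T}. (norm (x t - m t))\<^sup>2)"
  define P where "P = sq_path_length m T"
  define R where "R = 4 * (L + 5) + 16 * (L + 5) / \<mu>"
  have R1: "1 \<le> R"
    using muL by (simp add: R_def add_increasing2)
  have "(\<Sum>t\<in>{1..T}. f t (x t)) \<le> (\<Sum>t\<in>{1..T}. f t (m t) + L / 2 * (norm (x t - m t))\<^sup>2)"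
    using upper by (rule sum_mono)
  then have "sw_cost f T x \<le> Fm + L / 2 * E + sq_path_length x T / 2"
    by (simp add: sw_cost_eq Fm_def E_def sum.distrib sum_distrib_left)
  also have "\<dots> \<le> Fm + (L / 2 + 5/4) * E"
    using sq_path_length_le_tracking_error[where T = T, OF start(1,2) track]
    by (simp add: E_def algebra_simps)
  also have "\<dots> \<le> Fm + (L / 2 + 5/4) * (4 * P)"
    using tracking_error_le[where T = T, OF start(1,2) track] muL
    by (intro add_left_mono mult_left_mono) (auto simp: E_def P_def)
  also have "\<dots> = Fm + (2 * L + 5) * P"
    by (simp add: algebra_simps)
  also have "\<dots> \<le> Fm + (2 * L + 5) * ((2 + 8 / \<mu>) * (sw_cost f T y - Fm))"
    using sq_path_length_le_excess_cost[where f = f and T = T, OF muL(1) start(3) lower] muL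
    by (intro add_left_mono mult_left_mono) (auto simp: P_def Fm_def)
  also have "\<dots> \<le> R * sw_cost f T y"
  proof -
    have k: "0 < 2 + 8 / \<mu>"
      using muL by (simp add: add_pos_pos)
    have "0 \<le> P"
      unfolding P_def sq_path_length_def by (simp add: sum_nonneg)
    then have "0 \<le> (2 + 8 / \<mu>) * (sw_cost f T y - Fm)"
      using sq_path_length_le_excess_cost[where f = f and T = T, OF muL(1) start(3) lower]
      by (simp add: P_def Fm_def)
    then have excess: "0 \<le> sw_cost f T y - Fm"
      using k by (simp add: zero_le_mult_iff)
    have "(2 * L + 5) * (2 + 8 / \<mu>) \<le> R"
      using muL by (simp add: R_def field_simps)
    then have "(2 * L + 5) * ((2 + 8 / \<mu>) * (sw_cost f T y - Fm)) \<le> R * (sw_cost f T y - Fm)"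
      using excess by (metis mult.assoc mult_right_mono)
    moreover have "Fm \<le> R * Fm"
    proof -
      have "0 \<le> Fm"
        unfolding Fm_def by (rule sum_nonneg) (rule nonneg)
      then show ?thesis using R1 mult_right_mono[of 1 R Fm] by simp
    qed
    ultimately show ?thesis
      by (simp add: algebra_simps)
  qed
  finally show ?thesis by (simp add: R_def)
qed

lemma divide_opt_cost_le:
  fixes f :: "nat \<Rightarrow> 'a::euclidean_space \<Rightarrow> real"
  assumes X: "X \<noteq> {}" and R: "0 < R"
    and nonneg: "\<And>t x. t \<in> {1..T} \<Longrightarrow> x \<in> X \<Longrightarrow> 0 \<le> f t x"
    and bound: "\<And>y. y 0 = x0 \<Longrightarrow> \<forall>t\<in>{1..T}. y t \<in> X \<Longrightarrow> c \<le> R * sw_cost f T y"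
  shows "c / opt_cost X f T x0 \<le> R"
proof -
  define S where "S = {sw_cost f T y | y. y 0 = x0 \<and> (\<forall>t\<in>{1..T}. y t \<in> X)}"
  obtain x where "x \<in> X"
    using X by blast
  then have "sw_cost f T (\<lambda>t. if t = 0 then x0 else x) \<in> S"
    unfolding S_def by auto
  then have S: "S \<noteq> {}"
    by blast
  have "0 \<le> Inf S"
    using S nonneg unfolding S_def sw_cost_def by (fastforce intro!: cInf_greatest sum_nonneg)
  moreover have "c / R \<le> Inf S"
    using S bound R unfolding S_def by (fastforce intro!: cInf_greatest simp: divide_le_eq mult.commute)
  moreover have "opt_cost X f T x0 = Inf S"
    by (simp add: opt_cost_def S_def)
  \<comment> \<open>if the optimum is 0, the ratio is 0 by the convention c / 0 = 0\<close>
  ultimately show ?thesis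
    using R by (cases "Inf S = 0") (auto simp: divide_le_eq mult.commute)
qed

lemma omgd_sw_cost_le:
  fixes f :: "nat \<Rightarrow> 'a::euclidean_space \<Rightarrow> real"
  assumes X: "convex X" "closed X" and x0: "x0 \<in> X" and muL: "0 < \<mu>" "\<mu> \<le> L"
    and K: "((L - \<mu>) / (L + \<mu>)) ^ K \<le> 1/4"
    and m0: "m 0 = x0" and m: "\<And>t. t \<in> {1..T} \<Longrightarrow> m t \<in> X \<and> g t (m t) = 0"
    and nonneg: "\<And>t x. t \<in> {1..T} \<Longrightarrow> x \<in> X \<Longrightarrow> 0 \<le> f t x"
    and sc: "\<And>t x y. t \<in> {1..T} \<Longrightarrow> x \<in> X \<Longrightarrow> y \<in> X \<Longrightarrow>
               \<mu> / 2 * (norm (y - x))\<^sup>2 \<le> f t y - f t x - g t x \<bullet> (y - x)"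
    and sm: "\<And>t x y. t \<in> {1..T} \<Longrightarrow> x \<in> X \<Longrightarrow> y \<in> X \<Longrightarrow>
               f t y - f t x - g t x \<bullet> (y - x) \<le> L / 2 * (norm (y - x))\<^sup>2"
    and y: "y 0 = x0" "\<forall>t\<in>{1..T}. y t \<in> X"
  shows "sw_cost f T (omgd X L g K x0) \<le> (4 * (L + 5) + 16 * (L + 5) / \<mu>) * sw_cost f T y"
proof (rule sw_cost_le_of_tracking[OF muL])
  show "(norm (omgd X L g K x0 t - m (t - 1)))\<^sup>2 \<le> (norm (omgd X L g K x0 (t - 1) - m (t - 1)))\<^sup>2 / 4"
    if t: "t \<in> {2..T}" for t
  proof -
    have t1: "t - 1 \<in> {1..T}"
      using t by auto
    show ?thesis
      using t m[OF t1] sc[OF t1] sm[OF t1]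
      by (intro omgd_tracks_minimizer[OF X x0 muL K]) auto
  qed
  show "f t (omgd X L g K x0 t) \<le> f t (m t) + L / 2 * (norm (omgd X L g K x0 t - m t))\<^sup>2"
    if t: "t \<in> {1..T}" for t
    using sm[OF t _ omgd_in[OF X(2) x0, where L = L and g = g and K = K and t = t]] m[OF t]
    by force
  show "f t (m t) + \<mu> / 2 * (norm (y t - m t))\<^sup>2 \<le> f t (y t)" if t: "t \<in> {1..T}" for t
    using sc[OF t] m[OF t] y(2) t by force
  show "0 \<le> f t (m t)" if t: "t \<in> {1..T}" for t
    using nonneg[OF t] m[OF t] by blast
qed (simp_all add: m0 y(1))

theorem theorem1:
  fixes X :: "'a::euclidean_space set"
    and f :: "nat \<Rightarrow> 'a \<Rightarrow> real"
    and g :: "nat \<Rightarrow> 'a \<Rightarrow> 'a"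
    and T :: nat and \<mu> L :: real
  assumes T: "T \<ge> 1"
    and X: "X \<noteq> {}" "closed X" "convex X" "0 \<in> X"
    and muL: "0 < \<mu>" "\<mu> \<le> L"
    and nonneg: "\<And>t x. t \<in> {1..T} \<Longrightarrow> x \<in> X \<Longrightarrow> f t x \<ge> 0"
    and grad: "\<And>t x. t \<in> {1..T} \<Longrightarrow> x \<in> X \<Longrightarrow>
                 (f t has_derivative (\<lambda>h. g t x \<bullet> h)) (at x within X)"
    and sc: "\<And>t x y. t \<in> {1..T} \<Longrightarrow> x \<in> X \<Longrightarrow> y \<in> X \<Longrightarrow>
                 \<mu> / 2 * (norm (y - x))\<^sup>2 \<le> f t y - f t x - g t x \<bullet> (y - x)"
    and sm: "\<And>t x y. t \<in> {1..T} \<Longrightarrow> x \<in> X \<Longrightarrow> y \<in> X \<Longrightarrow>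
                 f t y - f t x - g t x \<bullet> (y - x) \<le> L / 2 * (norm (y - x))\<^sup>2"
    and interior_min: "\<And>t x. t \<in> {1..T} \<Longrightarrow> x \<in> X \<Longrightarrow> (\<forall>y\<in>X. f t x \<le> f t y) \<Longrightarrow> x \<in> interior X"
  shows "sw_cost f T (omgd X L g (nat \<lceil>(L + \<mu>) / (2 * \<mu>) * ln 4\<rceil>) 0)
           / opt_cost X f T 0
         \<le> 4 * (L + 5) + 16 * (L + 5) / \<mu>"
proof -
  have "\<exists>m. m 0 = 0 \<and> (\<forall>t\<in>{1..T}. m t \<in> X \<and> g t (m t) = 0)"
    using grad sc interior_min by (rule exists_stationary_minimizers[OF X(2,4) muL(1)])
  then obtain m where m: "m 0 = 0" "\<forall>t\<in>{1..T}. m t \<in> X \<and> g t (m t) = 0"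
    by blast
  have R: "0 < 4 * (L + 5) + 16 * (L + 5) / \<mu>"
    using muL by (simp add: add_pos_pos)
  have bound: "sw_cost f T (omgd X L g (nat \<lceil>(L + \<mu>) / (2 * \<mu>) * ln 4\<rceil>) 0)
      \<le> (4 * (L + 5) + 16 * (L + 5) / \<mu>) * sw_cost f T y"
    if "y 0 = 0" "\<forall>t\<in>{1..T}. y t \<in> X" for y
    using m that
    by (intro omgd_sw_cost_le[where m = m, OF X(3,2,4) muL pgd_rate_power_le_quarter[OF muL] _ _ nonneg sc sm])
      auto
  show ?thesis
    using divide_opt_cost_le[OF X(1) R nonneg bound] .
qed

end
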